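(* For every class of closed formulas $\mathbb{P}$ and every $n$, every safety problem provable in $\mathbf{FI}^{\mathbb{P}}_n$ is also provable in $\mathbf{F}^{\wedge_n\mathbb{P}}$. Moreover, for every $n>0$ there exist a class of predicates $\mathbb{P}$ and a safety problem $\Pi$ such that $\Pi$ is provable in $\mathbf{FI}^{\mathbb{P}}_n$ but not provable in $\mathbf{FI}^{\mathbb{P}}_{n-1}$.
   Context: A first-order vocabulary $\Sigma$ consists of constant, function and relation symbols; $\Sigma'=\{a' : a\in\Sigma\}$ is a disjoint copy, and for a formula $\varphi$ over $\Sigma$, $\varphi'$ denotes $\varphi$ with every symbol replaced by its primed copy. A safety problem is a triple $(\iota,\tau,\beta)$, where $\iota,\beta$ are closed formulas over $\Sigma$ and $\tau$ is a closed formula over $\Sigma\uplus\Sigma'$. $A\Rightarrow B$ means the implication $A\to B$ is valid. Proofs: a proof of $\Pi$ in a system is a finite tree whose nodes are safety problems, whose root is $\Pi$, and in which each node together with its children is an instance of one of the system's inference rules, with side conditions valid. Rules ($\varphi$ ranges over closed formulas over $\Sigma$): (Ind): no premises; conclusion $(\iota,\tau,\neg\varphi)$; side conditions $\iota\Rightarrow\varphi$ and $\varphi\wedge\tau\Rightarrow\varphi'$. (Cons): premise $(\iota,\tau,\neg\varphi)$; conclusion $(\iota,\tau,\beta)$; side condition $\varphi\Rightarrow\neg\beta$. (Inc): premises $(\iota,\tau,\neg\varphi)$ and $(\iota\wedge\varphi,\ \tau\wedge\varphi\wedge\varphi',\ \beta\wedge\varphi)$; conclusion $(\iota,\tau,\beta)$.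 $\mathbf{F}$ consists of (Ind) and (Cons); $\mathbf{FI}$ consists of (Ind), (Cons), (Inc). For a class of closed formulas $\mathbb{P}$, $\mathbf{F}^{\mathbb{P}}$ (resp. $\mathbf{FI}^{\mathbb{P}}$) restricts applications of (Ind) to $\varphi\in\mathbb{P}$, and $\mathbf{FI}^{\mathbb{P}}_n$ further restricts proofs to use at most $n$ applications of (Ind). $\wedge_n\mathbb{P}$ denotes the class of conjunctions of at most $n$ predicates from $\mathbb{P}$. *)

theory Defs
  imports Main
begin

datatype 'f trm = Var nat | Fn 'f "'f trm list"

datatype ('f, 'r) fm =
    Bot
  | Top
  | Atom 'r "'f trm list"
  | Eq "'f trm" "'f trm"
  | Neg "('f, 'r) fm"
  | Conj "('f, 'r) fm" "('f, 'r) fm"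
  | Disj "('f, 'r) fm" "('f, 'r) fm"
  | Imp "('f, 'r) fm" "('f, 'r) fm"
  | All nat "('f, 'r) fm"
  | Ex nat "('f, 'r) fm"

fun fvt :: "'f trm \<Rightarrow> nat set" where
  "fvt (Var x) = {x}"
| "fvt (Fn f ts) = (\<Union>t\<in>set ts. fvt t)"

fun fv :: "('f, 'r) fm \<Rightarrow> nat set" where
  "fv Bot = {}"
| "fv Top = {}"
| "fv (Atom r ts) = (\<Union>t\<in>set ts. fvt t)"
| "fv (Eq s t) = fvt s \<union> fvt t"
| "fv (Neg a) = fv a"
| "fv (Conj a b) = fv a \<union> fv b"
| "fv (Disj a b) = fv a \<union> fv b"
| "fv (Imp a b) = fv a \<union> fv b"
| "fv (All x a) = fv a - {x}"
| "fv (Ex x a) = fv a - {x}"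

definition closed :: "('f, 'r) fm \<Rightarrow> bool" where
  "closed a \<longleftrightarrow> fv a = {}"

record ('f, 'r) vocab =
  fsyms :: "'f set"
  rsyms :: "'r set"
  farity :: "'f \<Rightarrow> nat"
  rarity :: "'r \<Rightarrow> nat"

fun wft :: "('f, 'r) vocab \<Rightarrow> 'f trm \<Rightarrow> bool" where
  "wft V (Var x) = True"
| "wft V (Fn f ts) = (f \<in> fsyms V \<and> length ts = farity V f \<and> (\<forall>t\<in>set ts. wft V t))"

fun wf :: "('f, 'r) vocab \<Rightarrow> ('f, 'r) fm \<Rightarrow> bool" where
  "wf V Bot = True"
| "wf V Top = True"
| "wf V (Atom r ts) = (r \<in> rsyms V \<and> length ts = rarity V r \<and> (\<forall>t\<in>set ts. wft V t))"
| "wf V (Eq s t) = (wft V s \<and> wft V t)"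
| "wf V (Neg a) = wf V a"
| "wf V (Conj a b) = (wf V a \<and> wf V b)"
| "wf V (Disj a b) = (wf V a \<and> wf V b)"
| "wf V (Imp a b) = (wf V a \<and> wf V b)"
| "wf V (All x a) = wf V a"
| "wf V (Ex x a) = wf V a"

definition cfm :: "('f, 'r) vocab \<Rightarrow> ('f, 'r) fm set" where
  "cfm V = {a. closed a \<and> wf V a}"

text \<open>The vocabulary \<Sigma> \<uplus> \<Sigma>': unprimed symbols are tagged Inl, primed ones Inr.\<close>
definition dvocab :: "('f, 'r) vocab \<Rightarrow> ('f + 'f, 'r + 'r) vocab" where
  "dvocab V = \<lparr> fsyms = Inl ` fsyms V \<union> Inr ` fsyms V,
               rsyms = Inl ` rsyms V \<union> Inr ` rsyms V,
               farity = case_sum (farity V) (farity V),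
               rarity = case_sum (rarity V) (rarity V) \<rparr>"

definition unp :: "('f, 'r) fm \<Rightarrow> ('f + 'f, 'r + 'r) fm" where
  "unp a = map_fm Inl Inl a"

definition prime :: "('f, 'r) fm \<Rightarrow> ('f + 'f, 'r + 'r) fm" where
  "prime a = map_fm Inr Inr a"

text \<open>Structures have a nonempty domain D (a set of naturals); symbols are
  interpreted on argument lists.  Restricting to countable domains does not
  change validity of single first-order sentences (downward Loewenheim-Skolem).\<close>

fun evalt :: "('f \<Rightarrow> nat list \<Rightarrow> nat) \<Rightarrow> (nat \<Rightarrow> nat) \<Rightarrow> 'f trm \<Rightarrow> nat" where
  "evalt I e (Var x) = e x"
| "evalt I e (Fn f ts) = I f (map (evalt I e) ts)"

fun holds :: "nat set \<Rightarrow> ('f \<Rightarrow> nat list \<Rightarrow> nat) \<Rightarrow> ('r \<Rightarrow> nat list \<Rightarrow> bool)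
    \<Rightarrow> (nat \<Rightarrow> nat) \<Rightarrow> ('f, 'r) fm \<Rightarrow> bool" where
  "holds D I R e Bot = False"
| "holds D I R e Top = True"
| "holds D I R e (Atom r ts) = R r (map (evalt I e) ts)"
| "holds D I R e (Eq s t) = (evalt I e s = evalt I e t)"
| "holds D I R e (Neg a) = (\<not> holds D I R e a)"
| "holds D I R e (Conj a b) = (holds D I R e a \<and> holds D I R e b)"
| "holds D I R e (Disj a b) = (holds D I R e a \<or> holds D I R e b)"
| "holds D I R e (Imp a b) = (holds D I R e a \<longrightarrow> holds D I R e b)"
| "holds D I R e (All x a) = (\<forall>d\<in>D. holds D I R (e(x := d)) a)"
| "holds D I R e (Ex x a) = (\<exists>d\<in>D. holds D I R (e(x := d)) a)"

definition is_structure :: "nat set \<Rightarrow> ('f \<Rightarrow> nat list \<Rightarrow> nat) \<Rightarrow> bool" where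
  "is_structure D I \<longleftrightarrow> D \<noteq> {} \<and> (\<forall>f xs. set xs \<subseteq> D \<longrightarrow> I f xs \<in> D)"

definition valid :: "('f, 'r) fm \<Rightarrow> bool" where
  "valid a \<longleftrightarrow> (\<forall>D I R e. is_structure D I \<longrightarrow> range e \<subseteq> D \<longrightarrow> holds D I R e a)"

definition entails :: "('f, 'r) fm \<Rightarrow> ('f, 'r) fm \<Rightarrow> bool" where
  "entails a b \<longleftrightarrow> valid (Imp a b)"

type_synonym ('f, 'r) sprob = "('f, 'r) fm \<times> ('f + 'f, 'r + 'r) fm \<times> ('f, 'r) fm"

definition safety_problem :: "('f, 'r) vocab \<Rightarrow> ('f, 'r) sprob \<Rightarrow> bool" where
  "safety_problem V \<Pi> = (case \<Pi> of (\<iota>, \<tau>, \<beta>) \<Rightarrow>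
      \<iota> \<in> cfm V \<and> \<tau> \<in> cfm (dvocab V) \<and> \<beta> \<in> cfm V)"

text \<open>derives V inc P \<Pi> k: there is a proof tree of \<Pi> (all nodes are safety
  problems over V) in the system with rules (Ind) restricted to \<phi> \<in> P, (Cons),
  and, if inc is true, (Inc); k is the number of applications of (Ind) in the tree.\<close>

inductive derives :: "('f, 'r) vocab \<Rightarrow> bool \<Rightarrow> ('f, 'r) fm set \<Rightarrow> ('f, 'r) sprob \<Rightarrow> nat \<Rightarrow> bool"
  for V :: "('f, 'r) vocab" and inc :: bool and P :: "('f, 'r) fm set" where
  Ind: "\<lbrakk> safety_problem V (\<iota>, \<tau>, Neg \<phi>); \<phi> \<in> cfm V; \<phi> \<in> P;
          entails \<iota> \<phi>; entails (Conj (unp \<phi>) \<tau>) (prime \<phi>) \<rbrakk>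
        \<Longrightarrow> derives V inc P (\<iota>, \<tau>, Neg \<phi>) 1"
| Cons: "\<lbrakk> safety_problem V (\<iota>, \<tau>, \<beta>); \<phi> \<in> cfm V;
           derives V inc P (\<iota>, \<tau>, Neg \<phi>) k; entails \<phi> (Neg \<beta>) \<rbrakk>
        \<Longrightarrow> derives V inc P (\<iota>, \<tau>, \<beta>) k"
| Inc: "\<lbrakk> inc; safety_problem V (\<iota>, \<tau>, \<beta>); \<phi> \<in> cfm V;
          derives V inc P (\<iota>, \<tau>, Neg \<phi>) k1;
          derives V inc P (Conj \<iota> \<phi>, Conj \<tau> (Conj (unp \<phi>) (prime \<phi>)), Conj \<beta> \<phi>) k2 \<rbrakk>
        \<Longrightarrow> derives V inc P (\<iota>, \<tau>, \<beta>) (k1 + k2)"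

definition provable_F :: "('f, 'r) vocab \<Rightarrow> ('f, 'r) fm set \<Rightarrow> ('f, 'r) sprob \<Rightarrow> bool" where
  "provable_F V P \<Pi> \<longleftrightarrow> (\<exists>k. derives V False P \<Pi> k)"

definition provable_FI_n :: "('f, 'r) vocab \<Rightarrow> ('f, 'r) fm set \<Rightarrow> nat \<Rightarrow> ('f, 'r) sprob \<Rightarrow> bool" where
  "provable_FI_n V P n \<Pi> \<longleftrightarrow> (\<exists>k\<le>n. derives V True P \<Pi> k)"

fun conjs :: "('f, 'r) fm list \<Rightarrow> ('f, 'r) fm" where
  "conjs [] = Top"
| "conjs [a] = a"
| "conjs (a # as) = Conj a (conjs as)"

definition conj_class :: "nat \<Rightarrow> ('f, 'r) fm set \<Rightarrow> ('f, 'r) fm set" where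
  "conj_class n P = {conjs xs | xs. xs \<noteq> [] \<and> length xs \<le> n \<and> set xs \<subseteq> P}"

end

theory Submission
  imports Defs
begin

text \<open>Every \<open>FI\<close>-proof using (Ind) \<open>k\<close> times yields one safe inductive invariant that is a
  conjunction of at most \<open>k\<close> predicates of \<open>P\<close>: (Inc) combines the invariant \<open>\<phi>\<^sub>1\<close> of its first
  premise with the invariant \<open>\<phi>\<^sub>2\<close> of its second, relatively inductive one, into \<open>\<phi>\<^sub>1 \<and> \<phi>\<^sub>2\<close>.
  A single (Ind) with this conjunction, followed by (Cons), is then an \<open>F\<close>-proof.
  For the separation take \<open>n\<close> propositional atoms, unsatisfiable \<open>\<iota>\<close> and \<open>\<tau>\<close>, and as bad states
  the negation of the conjunction of all atoms: every atom is inductive, so \<open>n\<close> nested (Inc)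
  steps prove the problem, while a conjunction of fewer than \<open>n\<close> atoms misses some atom and
  does not imply it.\<close>

lemma evalt_map_trm: "evalt I e (map_trm g t) = evalt (\<lambda>f. I (g f)) e t"
  by (induction t) (auto cong: map_cong)

lemma holds_map_fm:
  "holds D I R e (map_fm g h a) = holds D (\<lambda>f. I (g f)) (\<lambda>r. R (h r)) e a"
  by (induction a arbitrary: e) (auto simp: evalt_map_trm comp_def)

lemma holds_unp: "holds D I R e (unp a) = holds D (\<lambda>f. I (Inl f)) (\<lambda>r. R (Inl r)) e a"
  by (simp add: unp_def holds_map_fm)

lemma holds_prime: "holds D I R e (prime a) = holds D (\<lambda>f. I (Inr f)) (\<lambda>r. R (Inr r)) e a"
  by (simp add: prime_def holds_map_fm)

lemma unp_Conj [simp]: "unp (Conj a b) = Conj (unp a) (unp b)"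
  and prime_Conj [simp]: "prime (Conj a b) = Conj (prime a) (prime b)"
  by (simp_all add: unp_def prime_def)

lemma is_structure_reindex: "is_structure D I \<Longrightarrow> is_structure D (\<lambda>f. I (g f))"
  by (simp add: is_structure_def)

lemma entails_iff:
  "entails a b \<longleftrightarrow>
    (\<forall>D I R e. is_structure D I \<longrightarrow> range e \<subseteq> D \<longrightarrow> holds D I R e a \<longrightarrow> holds D I R e b)"
  by (auto simp: entails_def valid_def)

lemma countermodel_not_entails:
  "is_structure D I \<Longrightarrow> holds D I R e a \<Longrightarrow> \<not> holds D I R e b \<Longrightarrow> range e \<subseteq> D
    \<Longrightarrow> \<not> entails a b"
  unfolding entails_iff by blast

lemma holds_conjs: "holds D I R e (conjs xs) \<longleftrightarrow> (\<forall>x\<in>set xs. holds D I R e x)"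
  by (induction xs rule: conjs.induct) auto

lemma fvt_map_trm: "fvt (map_trm g t) = fvt t"
  by (induction t) auto

lemma fv_map_fm: "fv (map_fm g h a) = fv a"
  by (induction a) (auto simp: fvt_map_trm)

lemma dvocab_sel [simp]:
  "fsyms (dvocab V) = Inl ` fsyms V \<union> Inr ` fsyms V"
  "rsyms (dvocab V) = Inl ` rsyms V \<union> Inr ` rsyms V"
  "farity (dvocab V) = case_sum (farity V) (farity V)"
  "rarity (dvocab V) = case_sum (rarity V) (rarity V)"
  by (simp_all add: dvocab_def)

lemma wft_dvocab_map_trm:
  "wft (dvocab V) (map_trm Inl t) = wft V t"
  "wft (dvocab V) (map_trm Inr t) = wft V t"
  by (induction t) auto

lemma wf_dvocab_map_fm:
  "wf (dvocab V) (map_fm Inl Inl a) = wf V a"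
  "wf (dvocab V) (map_fm Inr Inr a) = wf V a"
  by (induction a) (auto simp: wft_dvocab_map_trm)

lemma unp_in_cfm: "a \<in> cfm V \<Longrightarrow> unp a \<in> cfm (dvocab V)"
  by (simp add: cfm_def closed_def unp_def fv_map_fm wf_dvocab_map_fm)

lemma prime_in_cfm: "a \<in> cfm V \<Longrightarrow> prime a \<in> cfm (dvocab V)"
  by (simp add: cfm_def closed_def prime_def fv_map_fm wf_dvocab_map_fm)

lemma cfm_Neg_iff [simp]: "Neg a \<in> cfm V \<longleftrightarrow> a \<in> cfm V"
  and cfm_Conj_iff [simp]: "Conj a b \<in> cfm V \<longleftrightarrow> a \<in> cfm V \<and> b \<in> cfm V"
  by (auto simp: cfm_def closed_def)

lemma conjs_in_cfm: "set xs \<subseteq> cfm V \<Longrightarrow> conjs xs \<in> cfm V"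
  by (induction xs rule: conjs.induct) (auto simp: cfm_def closed_def)

lemma conj_class_mono: "k \<le> n \<Longrightarrow> conj_class k P \<subseteq> conj_class n P"
  by (auto simp: conj_class_def)

lemma conj_class_subset_cfm: "P \<subseteq> cfm V \<Longrightarrow> conj_class n P \<subseteq> cfm V"
  by (auto simp: conj_class_def intro!: conjs_in_cfm)

lemma conj_class_Conj:
  assumes "\<phi> \<in> conj_class k P" "\<psi> \<in> conj_class l P"
  obtains \<chi> where "\<chi> \<in> conj_class (k + l) P"
    and "\<And>D I R e. holds D I R e \<chi> \<longleftrightarrow> holds D I R e \<phi> \<and> holds D I R e \<psi>"
proof -
  obtain xs ys where "\<phi> = conjs xs" "\<psi> = conjs ys" "xs \<noteq> []" "ys \<noteq> []"
    "length xs \<le> k" "length ys \<le> l" "set xs \<subseteq> P" "set ys \<subseteq> P"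
    using assms by (auto simp: conj_class_def)
  then show thesis
    by (intro that[of "conjs (xs @ ys)"])
      (auto simp: conj_class_def holds_conjs intro!: exI[of _ "xs @ ys"])
qed

definition inductive_invariant :: "('f, 'r) fm \<Rightarrow> ('f + 'f, 'r + 'r) fm \<Rightarrow> ('f, 'r) fm \<Rightarrow> bool" where
  "inductive_invariant \<iota> \<tau> \<phi> \<longleftrightarrow> entails \<iota> \<phi> \<and> entails (Conj (unp \<phi>) \<tau>) (prime \<phi>)"

fun safe_invariant :: "('f, 'r) sprob \<Rightarrow> ('f, 'r) fm \<Rightarrow> bool" where
  "safe_invariant (\<iota>, \<tau>, \<beta>) \<phi> \<longleftrightarrow> inductive_invariant \<iota> \<tau> \<phi> \<and> entails \<phi> (Neg \<beta>)"

lemma inductive_invariant_cong: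
  assumes "\<And>D I R e. holds D I R e \<phi> \<longleftrightarrow> holds D I R e \<psi>"
  shows "inductive_invariant \<iota> \<tau> \<phi> \<longleftrightarrow> inductive_invariant \<iota> \<tau> \<psi>"
  by (simp add: inductive_invariant_def entails_iff holds_unp holds_prime assms)

lemma inductive_invariant_Bot: "inductive_invariant Bot Bot \<phi>"
  by (simp add: inductive_invariant_def entails_iff)

lemma inductive_invariant_strengthen:
  "inductive_invariant \<iota> \<tau> \<psi> \<Longrightarrow>
    inductive_invariant (Conj \<iota> \<phi>) (Conj \<tau> (Conj (unp \<phi>) (prime \<phi>))) \<psi>"
  by (simp add: inductive_invariant_def entails_iff)

lemma inductive_invariant_Conj:
  fixes a b \<phi> :: "('f, 'r) fm"
  assumes inv_a: "inductive_invariant \<iota> \<tau> a" and a_\<phi>: "entails a \<phi>"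
    and inv_b: "inductive_invariant (Conj \<iota> \<phi>) (Conj \<tau> (Conj (unp \<phi>) (prime \<phi>))) b"
  shows "inductive_invariant \<iota> \<tau> (Conj a b)"
proof -
  have "entails \<iota> (Conj a b)"
    using a_\<phi> inv_a inv_b by (auto simp: inductive_invariant_def entails_iff)
  moreover have "entails (Conj (unp (Conj a b)) \<tau>) (prime (Conj a b))"
    unfolding entails_iff
  proof (intro allI impI)
    fix D and I :: "'f + 'f \<Rightarrow> nat list \<Rightarrow> nat" and R :: "'r + 'r \<Rightarrow> nat list \<Rightarrow> bool" and e
    assume D: "is_structure D I" "range e \<subseteq> D"
      and step: "holds D I R e (Conj (unp (Conj a b)) \<tau>)"
    have a_\<phi>_reindexed: "holds D (\<lambda>f. I (g f)) (\<lambda>r. R (h r)) e a \<Longrightarrow>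
        holds D (\<lambda>f. I (g f)) (\<lambda>r. R (h r)) e \<phi>" for g h
      using a_\<phi> D is_structure_reindex unfolding entails_iff by blast
    from step have "holds D I R e (prime a)"
      using D inv_a by (auto simp: inductive_invariant_def entails_iff)
    with step have "holds D I R e (Conj (unp b) (Conj \<tau> (Conj (unp \<phi>) (prime \<phi>))))"
      by (auto simp: holds_unp holds_prime a_\<phi>_reindexed)
    then have "holds D I R e (prime b)"
      using D inv_b by (auto simp: inductive_invariant_def entails_iff)
    with \<open>holds D I R e (prime a)\<close> show "holds D I R e (prime (Conj a b))"
      by simp
  qed
  ultimately show ?thesis
    by (simp add: inductive_invariant_def)
qed

lemma derives_imp_safe_invariant:
  assumes "derives V inc P \<Pi> k"
  shows "\<exists>\<phi>\<in>conj_class k P. safe_invariant \<Pi> \<phi>"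
  using assms
proof (induction rule: derives.induct)
  case (Ind \<iota> \<tau> \<phi>)
  then have "\<phi> \<in> conj_class 1 P"
    by (auto simp: conj_class_def intro!: exI[of _ "[\<phi>]"])
  with Ind show ?case
    by (auto simp: inductive_invariant_def entails_iff)
next
  case (Cons \<iota> \<tau> \<beta> \<phi> k)
  then show ?case
    by (auto simp: entails_iff)
next
  case (Inc \<iota> \<tau> \<beta> \<phi> k1 k2)
  then obtain a b where a: "a \<in> conj_class k1 P" "safe_invariant (\<iota>, \<tau>, Neg \<phi>) a"
    and b: "b \<in> conj_class k2 P"
      "safe_invariant (Conj \<iota> \<phi>, Conj \<tau> (Conj (unp \<phi>) (prime \<phi>)), Conj \<beta> \<phi>) b"
    by blast
  obtain \<chi> where \<chi>: "\<chi> \<in> conj_class (k1 + k2) P"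
    and holds_\<chi>: "\<And>D I R e. holds D I R e \<chi> \<longleftrightarrow> holds D I R e (Conj a b)"
    using conj_class_Conj[OF a(1) b(1)] by auto
  have a_\<phi>: "entails a \<phi>"
    using a(2) by (simp add: entails_iff)
  have "inductive_invariant \<iota> \<tau> (Conj a b)"
    using a(2) b(2) a_\<phi> by (simp add: inductive_invariant_Conj)
  moreover have "entails (Conj a b) (Neg \<beta>)"
    using b(2) a_\<phi> by (simp add: entails_iff) blast
  ultimately have "safe_invariant (\<iota>, \<tau>, \<beta>) \<chi>"
    by (simp add: inductive_invariant_cong[OF holds_\<chi>] entails_iff holds_\<chi>)
  with \<chi> show ?case
    by blast
qed

lemma derives_of_safe_invariant:
  assumes "safety_problem V (\<iota>, \<tau>, \<beta>)" "\<phi> \<in> cfm V" "\<phi> \<in> P"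
    and "safe_invariant (\<iota>, \<tau>, \<beta>) \<phi>"
  shows "derives V inc P (\<iota>, \<tau>, \<beta>) 1"
proof -
  from assms(4) have "entails \<iota> \<phi>" "entails (Conj (unp \<phi>) \<tau>) (prime \<phi>)" "entails \<phi> (Neg \<beta>)"
    by (simp_all add: inductive_invariant_def)
  moreover have "safety_problem V (\<iota>, \<tau>, Neg \<phi>)"
    using assms(1,2) by (simp add: safety_problem_def)
  ultimately show ?thesis
    using assms(1-3) by (blast intro: derives.Ind derives.Cons)
qed

theorem provable_FI_n_imp_provable_F:
  assumes "P \<subseteq> cfm V" "safety_problem V \<Pi>" "provable_FI_n V P n \<Pi>"
  shows "provable_F V (conj_class n P) \<Pi>"
proof -
  obtain \<iota> \<tau> \<beta> where \<Pi>: "\<Pi> = (\<iota>, \<tau>, \<beta>)"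
    by (cases \<Pi>)
  obtain k where "k \<le> n" "derives V True P \<Pi> k"
    using assms(3) by (auto simp: provable_FI_n_def)
  then obtain \<phi> where \<phi>: "\<phi> \<in> conj_class n P" "safe_invariant \<Pi> \<phi>"
    using derives_imp_safe_invariant conj_class_mono by blast
  moreover have "\<phi> \<in> cfm V"
    using \<phi>(1) conj_class_subset_cfm[OF assms(1)] by blast
  ultimately show ?thesis
    using assms(2) derives_of_safe_invariant unfolding provable_F_def \<Pi> by blast
qed

lemma derives_Inc_chain:
  assumes "ys \<noteq> []" "set ys \<subseteq> P" "P \<subseteq> cfm V" "safety_problem V (\<iota>, \<tau>, \<beta>)"
    and "\<forall>y\<in>set ys. inductive_invariant \<iota> \<tau> y" "entails (conjs ys) (Neg \<beta>)"
  shows "derives V True P (\<iota>, \<tau>, \<beta>) (length ys)"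
  using assms
proof (induction ys arbitrary: \<iota> \<tau> \<beta>)
  case Nil
  then show ?case by simp
next
  case (Cons y ys)
  have y: "y \<in> cfm V" "y \<in> P"
    using Cons.prems by auto
  have first: "derives V True P (\<iota>, \<tau>, Neg y) 1"
    using Cons.prems y by (intro derives.Ind) (auto simp: safety_problem_def inductive_invariant_def)
  show ?case
  proof (cases "ys = []")
    case True
    with Cons.prems y first show ?thesis
      by (auto intro: derives.Cons)
  next
    case False
    have "derives V True P
        (Conj \<iota> y, Conj \<tau> (Conj (unp y) (prime y)), Conj \<beta> y) (length ys)"
    proof (rule Cons.IH)
      show "safety_problem V (Conj \<iota> y, Conj \<tau> (Conj (unp y) (prime y)), Conj \<beta> y)"
        using Cons.prems(4) y unp_in_cfm prime_in_cfm by (auto simp: safety_problem_def)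
      show "entails (conjs ys) (Neg (Conj \<beta> y))"
        using Cons.prems(6) False by (auto simp: entails_iff holds_conjs)
    qed (use Cons.prems False in \<open>auto simp: inductive_invariant_strengthen\<close>)
    with Cons.prems(4) y first show ?thesis
      using derives.Inc[OF TrueI] by fastforce
  qed
qed

definition prop_vocab :: "nat \<Rightarrow> (nat, nat) vocab" where
  "prop_vocab n = \<lparr> fsyms = {}, rsyms = {..<n}, farity = (\<lambda>_. 0), rarity = (\<lambda>_. 0) \<rparr>"

definition prop_atoms :: "nat \<Rightarrow> (nat, nat) fm list" where
  "prop_atoms n = map (\<lambda>i. Atom i []) [0..<n]"

definition all_atoms_problem :: "nat \<Rightarrow> (nat, nat) sprob" where
  "all_atoms_problem n = (Bot, Bot, Neg (conjs (prop_atoms n)))"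

lemma prop_atoms_in_cfm: "set (prop_atoms n) \<subseteq> cfm (prop_vocab n)"
  by (auto simp: prop_atoms_def prop_vocab_def cfm_def closed_def)

lemma safety_problem_all_atoms: "safety_problem (prop_vocab n) (all_atoms_problem n)"
  using conjs_in_cfm[OF prop_atoms_in_cfm]
  by (simp add: safety_problem_def all_atoms_problem_def cfm_def closed_def)

lemma provable_all_atoms:
  assumes "n > 0"
  shows "provable_FI_n (prop_vocab n) (set (prop_atoms n)) n (all_atoms_problem n)"
proof -
  have "derives (prop_vocab n) True (set (prop_atoms n)) (all_atoms_problem n)
      (length (prop_atoms n))"
    unfolding all_atoms_problem_def
    using assms prop_atoms_in_cfm safety_problem_all_atoms[of n]
    by (intro derives_Inc_chain)
      (auto simp: prop_atoms_def all_atoms_problem_def inductive_invariant_Bot entails_iff)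
  then show ?thesis
    by (auto simp: provable_FI_n_def prop_atoms_def)
qed

lemma conj_class_prop_atoms_not_entails:
  assumes "\<phi> \<in> conj_class k (set (prop_atoms n))" "k < n"
  shows "\<not> entails \<phi> (conjs (prop_atoms n))"
proof -
  obtain xs where xs: "\<phi> = conjs xs" "length xs \<le> k" "set xs \<subseteq> set (prop_atoms n)"
    using assms(1) by (auto simp: conj_class_def)
  have "card (set (prop_atoms n)) = n"
    by (simp add: prop_atoms_def card_image inj_on_def)
  then have "card (set xs) < card (set (prop_atoms n))"
    using card_length[of xs] xs(2) assms(2) by linarith
  then have "\<not> set (prop_atoms n) \<subseteq> set xs"
    using card_mono[OF List.finite_set, of "set (prop_atoms n)" xs] by linarith
  then obtain a where "a \<in> set (prop_atoms n)" "a \<notin> set xs"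
    by blast
  then obtain j where j: "j < n" "Atom j [] \<notin> set xs"
    by (auto simp: prop_atoms_def)
  let ?I = "\<lambda>(_::nat) (_::nat list). 0::nat"
  let ?R = "\<lambda>(i::nat) (_::nat list). i \<noteq> j"
  have "is_structure {0} ?I"
    by (simp add: is_structure_def)
  moreover have "holds {0} ?I ?R (\<lambda>_. 0) \<phi>"
    using xs(1,3) j(2) by (auto simp: holds_conjs prop_atoms_def)
  moreover have "\<not> holds {0} ?I ?R (\<lambda>_. 0) (conjs (prop_atoms n))"
    using j(1) by (auto simp: holds_conjs prop_atoms_def)
  ultimately show ?thesis
    by (rule countermodel_not_entails) simp
qed

lemma not_provable_all_atoms:
  assumes "n > 0"
  shows "\<not> provable_FI_n (prop_vocab n) (set (prop_atoms n)) (n - 1) (all_atoms_problem n)"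
proof
  assume "provable_FI_n (prop_vocab n) (set (prop_atoms n)) (n - 1) (all_atoms_problem n)"
  then obtain k where "k \<le> n - 1"
    and "derives (prop_vocab n) True (set (prop_atoms n)) (all_atoms_problem n) k"
    by (auto simp: provable_FI_n_def)
  then obtain \<phi> where
    "\<phi> \<in> conj_class (n - 1) (set (prop_atoms n))" "safe_invariant (all_atoms_problem n) \<phi>"
    using derives_imp_safe_invariant conj_class_mono by blast
  moreover have "n - 1 < n"
    using assms by simp
  moreover have "entails \<phi> (conjs (prop_atoms n))"
    using \<open>safe_invariant (all_atoms_problem n) \<phi>\<close>
    by (auto simp: all_atoms_problem_def entails_iff)
  ultimately show False
    using conj_class_prop_atoms_not_entails by blast
qed

theorem theorem4p7:
  shows "(\<forall>(V :: ('f, 'r) vocab) P n \<Pi>.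
            P \<subseteq> cfm V \<longrightarrow> safety_problem V \<Pi> \<longrightarrow> provable_FI_n V P n \<Pi>
              \<longrightarrow> provable_F V (conj_class n P) \<Pi>)
       \<and> (\<forall>n > 0. \<exists>(V :: (nat, nat) vocab) P \<Pi>.
            P \<subseteq> cfm V \<and> safety_problem V \<Pi> \<and>
            provable_FI_n V P n \<Pi> \<and> \<not> provable_FI_n V P (n - 1) \<Pi>)"
proof (intro conjI allI impI)
  fix V :: "('f, 'r) vocab" and P n \<Pi>
  assume "P \<subseteq> cfm V" "safety_problem V \<Pi>" "provable_FI_n V P n \<Pi>"
  then show "provable_F V (conj_class n P) \<Pi>"
    by (rule provable_FI_n_imp_provable_F)
next
  fix n :: nat
  assume "n > 0"
  then show "\<exists>(V :: (nat, nat) vocab) P \<Pi>.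
      P \<subseteq> cfm V \<and> safety_problem V \<Pi> \<and>
      provable_FI_n V P n \<Pi> \<and> \<not> provable_FI_n V P (n - 1) \<Pi>"
    using prop_atoms_in_cfm safety_problem_all_atoms provable_all_atoms not_provable_all_atoms
    by (intro exI[of _ "prop_vocab n"] exI[of _ "set (prop_atoms n)"]
        exI[of _ "all_atoms_problem n"]) simp
qed

end
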